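(* Let $p$ be a prime. The matrix $(L(n,k,0,p))_{n,k\ge0}$ has the properties that for each $k\ge0$ there is $i\in\{0,\dots,p-1\}$ with $L(n,k,0,p)=e(n,k,i,p)$ for all $n\ge0$, and $L(n,n,0,p)=1$ for all $n\ge 0$; moreover it is the unique matrix $(a(n,k))_{n,k\ge0}$ with these two properties (each column equal to $(e(n,k,i,p))_{n\ge0}$ for some $i$, and all main-diagonal entries equal to $1$).
   Context: $e(n,k,j,p)$ is the number of $k$-element subsets of $\{1,\dots,n\}$ whose sum of elements is congruent to $j$ modulo $p$ (the empty set has sum $0$). $\begin{bmatrix} n\\ k\end{bmatrix}_q$ is the Gaussian binomial coefficient (a polynomial in $q$, zero for $k>n$). The $p$-Losanitsch numbers $L(n,k,j,p)$, $0\le j\le p-1$, are defined by $\sum_{j=0}^{p-1}L(n,k,j,p)q^j\equiv\begin{bmatrix} n\\ k\end{bmatrix}_q\pmod{q^p-1}$, i.e. $L(n,k,j,p)$ is the sum of the coefficients of $q^m$ in $\begin{bmatrix} n\\ k\end{bmatrix}_q$ over all $m\equiv j\pmod p$. *)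

theory Defs
  imports "HOL-Computational_Algebra.Polynomial"
begin

definition e_count :: "nat \<Rightarrow> nat \<Rightarrow> nat \<Rightarrow> nat \<Rightarrow> nat" where
  "e_count n k j p = card {S. S \<subseteq> {1..n} \<and> card S = k \<and> (\<Sum>S) mod p = j mod p}"

fun gauss_binom :: "nat \<Rightarrow> nat \<Rightarrow> int poly" where
  "gauss_binom n 0 = 1"
| "gauss_binom 0 (Suc k) = 0"
| "gauss_binom (Suc n) (Suc k) = gauss_binom n k + monom 1 (Suc k) * gauss_binom n (Suc k)"

definition losanitsch :: "nat \<Rightarrow> nat \<Rightarrow> nat \<Rightarrow> nat \<Rightarrow> int" where
  "losanitsch n k j p =
     (\<Sum>m \<in> {m. m \<le> degree (gauss_binom n k) \<and> m mod p = j mod p}. coeff (gauss_binom n k) m)"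

end

theory Submission
  imports Defs "HOL-Number_Theory.Cong"
begin

(* The generating polynomial of the k-subsets S of {1..n} by element sum satisfies
   sum_S q^(sum S) = q^(1+...+k) [n choose k]_q: splitting off the element 1 and shifting
   the rest down by one gives exactly the q-Pascal recurrence of the Gaussian binomial.
   Multiplying by a monomial q^t only shifts residue classes of exponents by t, so
   L(n,k,0,p) = e(n,k,i,p) with i = 1+...+k mod p. On the diagonal {1..k} is the only
   k-subset of {1..k}, so e(k,k,i,p) is 1 exactly for this i and 0 otherwise; hence the
   diagonal condition pins down the column index of any matrix of the required shape. *)

definition coeff_residue_sum :: "'a::comm_monoid_add poly \<Rightarrow> nat \<Rightarrow> nat \<Rightarrow> 'a" where
  "coeff_residue_sum f j p = (\<Sum>m \<in> {m. m \<le> degree f \<and> m mod p = j mod p}. coeff f m)"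

lemma losanitsch_eq_coeff_residue_sum:
  "losanitsch n k j p = coeff_residue_sum (gauss_binom n k) j p"
  by (simp add: losanitsch_def coeff_residue_sum_def)

lemma coeff_residue_sum_bound:
  assumes "degree f \<le> B"
  shows "coeff_residue_sum f j p = (\<Sum>m \<in> {m. m \<le> B \<and> m mod p = j mod p}. coeff f m)"
  unfolding coeff_residue_sum_def
  using assms by (intro sum.mono_neutral_left) (auto intro: le_degree)

lemma coeff_residue_sum_monom_mult:
  fixes f :: "'a::comm_semiring_1 poly"
  shows "coeff_residue_sum (monom 1 t * f) (j + t) p = coeff_residue_sum f j p"
proof -
  let ?B = "degree f + t"
  have "coeff_residue_sum (monom 1 t * f) (j + t) p
      = (\<Sum>s \<in> {s. s \<le> ?B \<and> s mod p = (j + t) mod p}. coeff (monom 1 t * f) s)"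
    by (rule coeff_residue_sum_bound)
      (metis add.commute add_le_mono degree_monom_le degree_mult_le le_trans order_refl)
  also have "\<dots> = (\<Sum>s \<in> (\<lambda>m. m + t) ` {m. m \<le> degree f \<and> m mod p = j mod p}. coeff (monom 1 t * f) s)"
  proof (rule sum.mono_neutral_right)
    show "(\<lambda>m. m + t) ` {m. m \<le> degree f \<and> m mod p = j mod p}
        \<subseteq> {s. s \<le> ?B \<and> s mod p = (j + t) mod p}"
      by (auto simp: cong_add_rcancel_nat[unfolded cong_def])
    show "\<forall>s \<in> {s. s \<le> ?B \<and> s mod p = (j + t) mod p} -
             (\<lambda>m. m + t) ` {m. m \<le> degree f \<and> m mod p = j mod p}.
            coeff (monom 1 t * f) s = 0"
    proof
      fix s assume s: "s \<in> {s. s \<le> ?B \<and> s mod p = (j + t) mod p} -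
             (\<lambda>m. m + t) ` {m. m \<le> degree f \<and> m mod p = j mod p}"
      have "s < t"
      proof (rule ccontr)
        assume "\<not> s < t"
        then obtain m where "s = m + t"
          by (metis add.commute le_iff_add not_less)
        then show False
          using s by (auto simp: cong_add_rcancel_nat[unfolded cong_def])
      qed
      then show "coeff (monom 1 t * f) s = 0"
        by (simp add: coeff_monom_mult)
    qed
  qed simp
  also have "\<dots> = coeff_residue_sum f j p"
    by (simp add: sum.reindex coeff_residue_sum_def coeff_monom_mult)
  finally show ?thesis .
qed

definition ksubsets :: "nat \<Rightarrow> nat \<Rightarrow> nat set set" where
  "ksubsets n k = {S. S \<subseteq> {1..n} \<and> card S = k}"

definition subset_sum_poly :: "nat \<Rightarrow> nat \<Rightarrow> int poly" where
  "subset_sum_poly n k = (\<Sum>S \<in> ksubsets n k. monom 1 (\<Sum>S))"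

lemma finite_ksubsets: "finite (ksubsets n k)"
  unfolding ksubsets_def by (rule finite_subset[of _ "Pow {1..n}"]) auto

lemma ksubsets_0: "ksubsets n 0 = {{}}"
  unfolding ksubsets_def by (auto dest: finite_subset)

lemma ksubsets_0_Suc: "ksubsets 0 (Suc k) = {}"
  unfolding ksubsets_def by auto

lemma ksubsets_Suc_Suc:
  "ksubsets (Suc n) (Suc k) =
     (\<lambda>T. insert 1 (Suc ` T)) ` ksubsets n k \<union> (\<lambda>T. Suc ` T) ` ksubsets n (Suc k)"
proof (intro equalityI subsetI)
  fix S assume "S \<in> ksubsets (Suc n) (Suc k)"
  then have S: "S \<subseteq> {1..Suc n}" "card S = Suc k" by (auto simp: ksubsets_def)
  have "S - {1} \<subseteq> Suc ` {1..n}" using S(1) by auto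
  then obtain T where T: "T \<subseteq> {1..n}" "S - {1} = Suc ` T"
    unfolding subset_image_iff by blast
  have "card T = card (S - {1})" using T(2) by (simp add: card_image)
  also have "\<dots> = (if 1 \<in> S then k else Suc k)"
    using S finite_subset by (simp add: card_Diff_singleton_if)
  finally consider "S = insert 1 (Suc ` T)" "card T = k" | "S = Suc ` T" "card T = Suc k"
    using T(2) by (cases "1 \<in> S") auto
  then show "S \<in> (\<lambda>T. insert 1 (Suc ` T)) ` ksubsets n k \<union> (\<lambda>T. Suc ` T) ` ksubsets n (Suc k)"
    using T(1) unfolding ksubsets_def by cases auto
next
  fix S assume "S \<in> (\<lambda>T. insert 1 (Suc ` T)) ` ksubsets n k \<union> (\<lambda>T. Suc ` T) ` ksubsets n (Suc k)"
  then obtain T where "T \<subseteq> {1..n}" "finite T"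
    "S = insert 1 (Suc ` T) \<and> card T = k \<or> S = Suc ` T \<and> card T = Suc k"
    by (auto simp: ksubsets_def dest: finite_subset)
  then show "S \<in> ksubsets (Suc n) (Suc k)"
    by (auto simp: ksubsets_def card_image card_insert_if)
qed

lemma sum_image_Suc: "\<Sum>(Suc ` T) = \<Sum>T + card (T :: nat set)"
  by (simp add: sum.reindex) (induction T rule: infinite_finite_induct; simp)

lemma subset_sum_poly_Suc_Suc:
  "subset_sum_poly (Suc n) (Suc k) = monom 1 (Suc k) * (subset_sum_poly n k + subset_sum_poly n (Suc k))"
proof -
  let ?ins = "\<lambda>T. insert 1 (Suc ` T)" and ?shift = "\<lambda>T :: nat set. Suc ` T"
  have zero_notin: "0 \<notin> T" and finite: "finite T" if "T \<in> ksubsets m j" for T m j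
    using that by (auto simp: ksubsets_def dest: finite_subset)
  have inj_ins: "inj_on ?ins (ksubsets n k)"
  proof (rule inj_onI)
    fix A B assume "A \<in> ksubsets n k" "B \<in> ksubsets n k" "?ins A = ?ins B"
    then have "?ins A - {1} = ?ins B - {1}" "1 \<notin> Suc ` A" "1 \<notin> Suc ` B"
      by (auto dest: zero_notin)
    then have "Suc ` A = Suc ` B" by auto
    then show "A = B" by (simp add: inj_image_eq_iff)
  qed
  have inj_shift: "inj_on ?shift X" for X
    by (simp add: inj_on_def inj_image_eq_iff)
  have disjoint: "?ins ` ksubsets n k \<inter> ?shift ` ksubsets n (Suc k) = {}"
    by (auto dest: zero_notin)
  have ins: "monom 1 (\<Sum>(?ins T)) = monom 1 (Suc k) * monom (1::int) (\<Sum>T)"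
    if "T \<in> ksubsets n k" for T
    using that zero_notin[OF that] finite[OF that]
    by (subst sum.insert) (auto simp: ksubsets_def mult_monom sum_image_Suc add.commute)
  have shift: "monom 1 (\<Sum>(?shift T)) = monom 1 (Suc k) * monom (1::int) (\<Sum>T)"
    if "T \<in> ksubsets n (Suc k)" for T
    using that by (simp add: ksubsets_def mult_monom sum_image_Suc add.commute)
  have "subset_sum_poly (Suc n) (Suc k)
      = (\<Sum>S \<in> ?ins ` ksubsets n k. monom 1 (\<Sum>S)) + (\<Sum>S \<in> ?shift ` ksubsets n (Suc k). monom 1 (\<Sum>S))"
    unfolding subset_sum_poly_def ksubsets_Suc_Suc
    by (rule sum.union_disjoint[OF _ _ disjoint]) (simp_all add: finite_ksubsets)
  also have "\<dots> = (\<Sum>T \<in> ksubsets n k. monom 1 (\<Sum>(?ins T)))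
                  + (\<Sum>T \<in> ksubsets n (Suc k). monom 1 (\<Sum>(?shift T)))"
    unfolding sum.reindex[OF inj_ins] sum.reindex[OF inj_shift] comp_def ..
  also have "\<dots> = monom 1 (Suc k) * (subset_sum_poly n k + subset_sum_poly n (Suc k))"
    unfolding subset_sum_poly_def distrib_left sum_distrib_left
    by (intro arg_cong2[where f = "(+)"] sum.cong refl ins shift)
  finally show ?thesis .
qed

lemma subset_sum_poly_0: "subset_sum_poly n 0 = 1"
  by (simp add: subset_sum_poly_def ksubsets_0)

lemma subset_sum_poly_0_Suc: "subset_sum_poly 0 (Suc k) = 0"
  by (simp add: subset_sum_poly_def ksubsets_0_Suc)

lemma subset_sum_poly_eq_gauss_binom:
  "subset_sum_poly n k = monom 1 (\<Sum>{1..k}) * gauss_binom n k"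
proof (induction n arbitrary: k)
  case 0
  then show ?case by (cases k) (simp_all add: subset_sum_poly_0 subset_sum_poly_0_Suc)
next
  case (Suc n)
  then show ?case
    by (cases k) (simp_all add: subset_sum_poly_0 subset_sum_poly_Suc_Suc algebra_simps mult_monom)
qed

lemma degree_subset_sum_poly_le: "degree (subset_sum_poly n k) \<le> \<Sum>{1..n}"
  unfolding subset_sum_poly_def
  by (intro degree_sum_le finite_ksubsets order.trans[OF degree_monom_le] sum_mono2)
    (auto simp: ksubsets_def)

lemma e_count_eq_coeff_residue_sum:
  "int (e_count n k j p) = coeff_residue_sum (subset_sum_poly n k) j p"
proof -
  let ?A = "{s. s \<le> \<Sum>{1..n} \<and> s mod p = j mod p}"
  have "coeff_residue_sum (subset_sum_poly n k) j p = (\<Sum>s \<in> ?A. coeff (subset_sum_poly n k) s)"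
    by (rule coeff_residue_sum_bound[OF degree_subset_sum_poly_le])
  also have "\<dots> = (\<Sum>s \<in> ?A. \<Sum>S \<in> ksubsets n k. if \<Sum>S = s then 1 else 0)"
    by (simp add: subset_sum_poly_def coeff_sum)
  also have "\<dots> = (\<Sum>S \<in> ksubsets n k. if \<Sum>S \<in> ?A then 1 else 0)"
    by (subst sum.swap) simp
  also have "\<dots> = int (card {S \<in> ksubsets n k. \<Sum>S \<in> ?A})"
    by (simp add: sum.If_cases finite_ksubsets Int_def)
  also have "{S \<in> ksubsets n k. \<Sum>S \<in> ?A} = {S. S \<subseteq> {1..n} \<and> card S = k \<and> \<Sum>S mod p = j mod p}"
    by (auto simp: ksubsets_def intro: sum_mono2)
  finally show ?thesis by (simp add: e_count_def)
qed

lemma losanitsch_eq_e_count: "losanitsch n k j p = int (e_count n k (j + \<Sum>{1..k}) p)"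
proof -
  have "losanitsch n k j p = coeff_residue_sum (monom 1 (\<Sum>{1..k}) * gauss_binom n k) (j + \<Sum>{1..k}) p"
    by (simp add: losanitsch_eq_coeff_residue_sum coeff_residue_sum_monom_mult)
  also have "\<dots> = int (e_count n k (j + \<Sum>{1..k}) p)"
    by (simp add: e_count_eq_coeff_residue_sum subset_sum_poly_eq_gauss_binom)
  finally show ?thesis .
qed

lemma e_count_mod [simp]: "e_count n k (j mod p) p = e_count n k j p"
  by (simp add: e_count_def)

lemma e_count_diag: "e_count k k j p = (if \<Sum>{1..k} mod p = j mod p then 1 else 0)"
proof -
  have "S = {1..k}" if "S \<subseteq> {1..k}" "card S = k" for S
    using card_subset_eq[OF finite_atLeastAtMost that(1)] that(2) by simp
  moreover have "card {1..k} = k" by simp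
  ultimately have "{S. S \<subseteq> {1..k} \<and> card S = k} = {{1..k}}"
    by blast
  then have "{S. S \<subseteq> {1..k} \<and> card S = k \<and> \<Sum>S mod p = j mod p}
      = {S \<in> {{1..k}}. \<Sum>S mod p = j mod p}"
    by blast
  also have "\<dots> = (if \<Sum>{1..k} mod p = j mod p then {{1..k}} else {})"
    by auto
  finally show ?thesis by (simp add: e_count_def)
qed

theorem proposition5p2:
  fixes p :: nat
  assumes "prime p"
  shows "(\<forall>k. \<exists>i<p. \<forall>n. losanitsch n k 0 p = int (e_count n k i p))
       \<and> (\<forall>n. losanitsch n n 0 p = 1)
       \<and> (\<forall>a :: nat \<Rightarrow> nat \<Rightarrow> int.
            ((\<forall>k. \<exists>i<p. \<forall>n. a n k = int (e_count n k i p)) \<and> (\<forall>n. a n n = 1))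
            \<longrightarrow> (\<forall>n k. a n k = losanitsch n k 0 p))"
proof (intro conjI allI impI)
  have "p > 0" using assms prime_gt_0_nat by blast
  show "\<exists>i<p. \<forall>n. losanitsch n k 0 p = int (e_count n k i p)" for k
    using \<open>p > 0\<close> by (intro exI[of _ "\<Sum>{1..k} mod p"]) (simp add: losanitsch_eq_e_count)
  show "losanitsch n n 0 p = 1" for n
    by (simp add: losanitsch_eq_e_count e_count_diag)
  fix a :: "nat \<Rightarrow> nat \<Rightarrow> int" and n k
  assume a: "(\<forall>k. \<exists>i<p. \<forall>n. a n k = int (e_count n k i p)) \<and> (\<forall>n. a n n = 1)"
  then obtain i where "i < p" and column: "\<forall>n. a n k = int (e_count n k i p)" by blast
  have "int (e_count k k i p) = a k k" using column by simp
  also have "\<dots> = 1" using a by blast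
  finally have "e_count k k i p = 1" by simp
  then have "\<Sum>{1..k} mod p = i mod p"
    by (metis e_count_diag zero_neq_one)
  then have "i = \<Sum>{1..k} mod p"
    using \<open>i < p\<close> by simp
  then show "a n k = losanitsch n k 0 p"
    using column by (simp add: losanitsch_eq_e_count)
qed

end
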